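(* Let $n=4$ and let $PV_1,\dots,PV_4$ be independent random variables with distributions $P_1=0.05\,\delta_{0.05}+0.95\,\delta_{1}$, $P_2=0.025\,\delta_{0.10}+0.975\,\delta_{1}$, $P_3=0.025\,\delta_{0.15}+0.975\,\delta_{1}$, $P_4=\delta_1$, where all four null hypotheses are true and each $F_i$ is the distribution function of $P_i$. Let $G=F_1+F_2+F_3+F_4$. Consider the DBH procedure at level $\alpha=0.05$: with ordered observed $p$-values $pv_{(1)}\le\cdots\le pv_{(4)}$, define adjusted $p$-values $\widetilde{pv}_{(4)}=pv_{(4)}$ and $\widetilde{pv}_{(i)}=\min\{\widetilde{pv}_{(i+1)},G(pv_{(i)})/i\}$ for $i=3,2,1$, and reject exactly those hypotheses whose adjusted $p$-value is $\le 0.05$. Then the probability of at least one rejection (which equals the FDR, since all nulls are true) is exactly $0.05059375>0.05$. In particular, the DBH procedure does not control the FDR at level $\alpha$ in general, even under independence.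
   Context: $\delta_x$ denotes the Dirac (point mass) measure at $x$. The FDR is $E[V/\max(R,1)]$ where $R$ is the number of rejections and $V$ the number of rejected true null hypotheses; when all nulls are true it equals $P(R\ge1)$. *)

theory Defs
  imports "HOL-Probability.Probability"
begin

definition two_point :: "real \<Rightarrow> real \<Rightarrow> real \<Rightarrow> real pmf" where
  "two_point a x y = map_pmf (\<lambda>b. if b then x else y) (bernoulli_pmf a)"

definition P :: "nat \<Rightarrow> real pmf" where
  "P i = (if i = 1 then two_point 0.05 0.05 1
          else if i = 2 then two_point 0.025 0.10 1
          else if i = 3 then two_point 0.025 0.15 1
          else return_pmf 1)"

definition F :: "nat \<Rightarrow> real \<Rightarrow> real" where
  "F i x = measure_pmf.prob (P i) {..x}"

definition G :: "real \<Rightarrow> real" where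
  "G x = (\<Sum>i\<in>{1..4}. F i x)"

definition joint :: "(nat \<Rightarrow> real) pmf" where
  "joint = Pi_pmf {1..4} 1 P"

text \<open>Ordered p-values pv_(1) <= ... <= pv_(n) as a list (index i-1 holds pv_(i)).\<close>
definition ordered_pvals :: "(nat \<Rightarrow> real) \<Rightarrow> real list" where
  "ordered_pvals pv = sort (map pv [1..<5])"

text \<open>DBH adjusted p-values by downward recursion: step k computes the adjusted
  value of rank i = n - k, with n = length ps.\<close>
fun dbh_adj_aux :: "(real \<Rightarrow> real) \<Rightarrow> real list \<Rightarrow> nat \<Rightarrow> real" where
  "dbh_adj_aux Gf ps 0 = ps ! (length ps - 1)"
| "dbh_adj_aux Gf ps (Suc k) =
     min (dbh_adj_aux Gf ps k)
         (Gf (ps ! (length ps - Suc k - 1)) / real (length ps - Suc k))"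

definition dbh_adj :: "(real \<Rightarrow> real) \<Rightarrow> real list \<Rightarrow> nat \<Rightarrow> real" where
  "dbh_adj Gf ps i = dbh_adj_aux Gf ps (length ps - i)"

text \<open>Number of rejections R of DBH at level alpha: hypotheses (identified with their
  ranks 1..4) whose adjusted p-value is <= alpha.\<close>
definition num_rej :: "real \<Rightarrow> (nat \<Rightarrow> real) \<Rightarrow> nat" where
  "num_rej \<alpha> pv = card {i \<in> {1..4}. dbh_adj G (ordered_pvals pv) i \<le> \<alpha>}"

text \<open>All nulls are true, so V = R; FDR = E[V / max(R,1)].\<close>
definition FDR :: "real \<Rightarrow> real" where
  "FDR \<alpha> = measure_pmf.expectation joint
      (\<lambda>pv. real (num_rej \<alpha> pv) / real (max (num_rej \<alpha> pv) 1))"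

end

theory Submission imports Defs begin

text \<open>The weight function is G(0.05) = 0.05, G(0.10) = 0.075, G(0.15) = 0.1 and
  G(1) = 4.  So DBH rejects when PV1 = 0.05 (then G(pv(1))/1 = 0.05), and when PV2 = 0.10 and
  PV3 = 0.15 (then G(pv(2))/2 = G(0.15)/2 = 0.05), but in no other case:
  P(R >= 1) = 0.05 + 0.95 * 0.025^2 = 0.05059375.  As all nulls are true, R / max(R,1) is
  the indicator of R >= 1, so the FDR equals this probability.\<close>

lemma expectation_ratio_max_one:
  fixes M :: "'a pmf" and r :: "'a \<Rightarrow> nat"
  shows "measure_pmf.expectation M (\<lambda>x. real (r x) / real (max (r x) 1))
           = measure_pmf.prob M {x. r x \<ge> 1}"
proof -
  have "(\<lambda>x. real (r x) / real (max (r x) 1)) = indicator {x. r x \<ge> 1}"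
    by (auto simp: indicator_def fun_eq_iff)
  then show ?thesis by simp
qed

lemma measure_two_point_atMost:
  assumes "0 \<le> a" "a \<le> 1" "x \<noteq> y"
  shows "measure_pmf.prob (two_point a x y) {..t}
           = (if x \<le> t then a else 0) + (if y \<le> t then 1 - a else 0)"
proof -
  have "measure_pmf.prob (two_point a x y) {..t}
          = measure_pmf.prob (bernoulli_pmf a) {b. (if b then x else y) \<le> t}"
    unfolding two_point_def by (simp add: vimage_def)
  also have "\<dots> = (\<Sum>b\<in>{b. (if b then x else y) \<le> t}. pmf (bernoulli_pmf a) b)"
    by (rule measure_measure_pmf_finite) simp
  also have "{b. (if b then x else y) \<le> t}
               = (if x \<le> t then {True} else {}) \<union> (if y \<le> t then {False} else {})"
    by auto
  finally show ?thesis using assms by (auto simp: sum.union_disjoint)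
qed

lemma G_eq:
  "G t = (if 0.05 \<le> t then 0.05 else 0) + (if 0.10 \<le> t then 0.025 else 0)
       + (if 0.15 \<le> t then 0.025 else 0) + (if 1 \<le> t then 3.9 else 0)"
proof -
  have four: "{1..4::nat} = {1, 2, 3, 4}" by auto
  show ?thesis
    unfolding G_def F_def four by (simp add: P_def measure_two_point_atMost)
qed

text \<open>PV4 = 1 almost surely; each of PV1, PV2, PV3 is encoded by a coin telling
  whether it takes its small value.\<close>

definition pvals_of_coins :: "bool \<times> bool \<times> bool \<Rightarrow> nat \<Rightarrow> real" where
  "pvals_of_coins = (\<lambda>(b1, b2, b3) i.
     if i = 1 \<and> b1 then 0.05 else if i = 2 \<and> b2 then 0.10 else if i = 3 \<and> b3 then 0.15 else 1)"

definition coins :: "(bool \<times> bool \<times> bool) pmf" where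
  "coins = pair_pmf (bernoulli_pmf 0.05) (pair_pmf (bernoulli_pmf 0.025) (bernoulli_pmf 0.025))"

lemma joint_eq_map_coins: "joint = map_pmf pvals_of_coins coins"
proof -
  have "{1..4::nat} = insert 1 (insert 2 (insert 3 {4}))" by auto
  then show ?thesis
    unfolding joint_def coins_def
    apply (simp add: Pi_pmf_insert Pi_pmf_singleton)
    apply (simp add: P_def two_point_def map_pmf_def pair_pmf_def bind_assoc_pmf bind_return_pmf)
    apply (intro bind_pmf_cong refl)
    apply (auto simp: pvals_of_coins_def fun_eq_iff)
    done
qed

lemma num_rej_ge_one_iff:
  "num_rej \<alpha> pv \<ge> 1 \<longleftrightarrow> (\<exists>i\<in>{1, 2, 3, 4}. dbh_adj G (ordered_pvals pv) i \<le> \<alpha>)"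
proof -
  have four: "{1..4::nat} = {1, 2, 3, 4}" by auto
  show ?thesis
    unfolding num_rej_def four by (simp only: One_nat_def Suc_le_eq card_gt_0_iff) auto
qed

lemma ordered_pvals_of_coins:
  "ordered_pvals (pvals_of_coins (b1, b2, b3))
     = sort [if b1 then 0.05 else 1, if b2 then 0.10 else 1, if b3 then 0.15 else 1, 1]"
  unfolding ordered_pvals_def by (simp add: pvals_of_coins_def upt_rec)

lemma rejects_iff:
  "num_rej 0.05 (pvals_of_coins (b1, b2, b3)) \<ge> 1 \<longleftrightarrow> b1 \<or> (b2 \<and> b3)"
  unfolding num_rej_ge_one_iff ordered_pvals_of_coins
  by (cases b1; cases b2; cases b3) (simp_all add: dbh_adj_def G_eq numeral_eq_Suc)

theorem mainTheorem3:
  shows "measure_pmf.prob joint {pv. num_rej 0.05 pv \<ge> 1} = 0.05059375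
         \<and> FDR 0.05 = 0.05059375 \<and> FDR 0.05 > 0.05"
proof -
  have "pvals_of_coins -` {pv. num_rej 0.05 pv \<ge> 1} = {(b1, b2, b3). b1 \<or> (b2 \<and> b3)}"
    using rejects_iff by force
  then have "measure_pmf.prob joint {pv. num_rej 0.05 pv \<ge> 1}
               = measure_pmf.prob coins {(b1, b2, b3). b1 \<or> (b2 \<and> b3)}"
    by (simp add: joint_eq_map_coins)
  also have "{(b1, b2, b3). b1 \<or> (b2 \<and> b3)} = {(True, False, False), (True, False, True),
      (True, True, False), (True, True, True), (False, True, True)}"
    by auto
  also have "measure_pmf.prob coins \<dots> = 0.05 + 0.95 * 0.025 * 0.025"
    by (subst measure_measure_pmf_finite) (simp_all add: coins_def pmf_pair)
  finally have rejection: "measure_pmf.prob joint {pv. num_rej 0.05 pv \<ge> 1} = 0.05059375"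
    by simp
  moreover from rejection have "FDR 0.05 = 0.05059375"
    unfolding FDR_def expectation_ratio_max_one .
  ultimately show ?thesis by simp
qed

end
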